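(* Let $n\geq 1$ and $0\leq m\leq n$, and let $S$ range over subsets of $\{1,\dots,n\}$ with $|S|=m$, $S^c=\{1,\dots,n\}\setminus S$. Then \begin{equation*} \sum_{\substack{S~\textrm{with}\\|S| = m}} \bigg(\prod_{\substack{\alpha<\beta,\\\alpha,\beta \in S^c}} T_{\beta\alpha}\bigg)\bigg(\prod_{\substack{\alpha<\beta,\\\alpha,\beta \in S}} T_{\beta\alpha}\bigg)\bigg( \prod_{\substack{\alpha<\beta,\\\ \alpha\in S, \beta \in S^c}} S_{\beta\alpha}\bigg) = \frac{[n]!}{[n-m]!\,[m]!}\bigg(\prod_{\substack{\alpha<\beta,\\ \alpha,\beta \in \{1,\dots, n\}} }T_{\beta\alpha}\bigg). \end{equation*}
   Context: Here $p\in(0,1)$, $q=1-p$, and $\xi_1,\dots,\xi_n$ are complex variables, with $S_{\beta\alpha} = -\frac{p+q\xi_{\alpha}\xi_{\beta} - \xi_{\beta}}{p+q\xi_{\alpha}\xi_{\beta} - \xi_{\alpha}}$ and $T_{\beta\alpha} = \frac{\xi_{\beta}-\xi_{\alpha}}{p+q\xi_{\alpha}\xi_{\beta} - \xi_{\alpha}}$. For nonnegative integers $k$, $[k] = \frac{p^k-q^k}{p-q}$, $[k]! = [k][k-1]\cdots[1]$ for $k\geq 1$ and $[0]!=1$. (The $(p,q)$-binomial coefficient $\frac{[n]!}{[n-m]![m]!}$ is defined to be $0$ if $m>n$.) *)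

theory Defs
  imports "HOL-Analysis.Analysis"
begin

definition Sm :: "real \<Rightarrow> (nat \<Rightarrow> complex) \<Rightarrow> nat \<Rightarrow> nat \<Rightarrow> complex" where
  "Sm p \<xi> \<beta> \<alpha> = - (of_real p + of_real (1 - p) * \<xi> \<alpha> * \<xi> \<beta> - \<xi> \<beta>)
                      / (of_real p + of_real (1 - p) * \<xi> \<alpha> * \<xi> \<beta> - \<xi> \<alpha>)"

definition Tm :: "real \<Rightarrow> (nat \<Rightarrow> complex) \<Rightarrow> nat \<Rightarrow> nat \<Rightarrow> complex" where
  "Tm p \<xi> \<beta> \<alpha> = (\<xi> \<beta> - \<xi> \<alpha>)
                      / (of_real p + of_real (1 - p) * \<xi> \<alpha> * \<xi> \<beta> - \<xi> \<alpha>)"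

text \<open>(p,q)-integer [k] = (p^k - q^k)/(p - q), written as the polynomial
  sum p^(k-1) + p^(k-2) q + ... + q^(k-1), which agrees with the quotient for p \<noteq> q
  and is its continuous extension at p = q = 1/2.\<close>
definition pq_int :: "real \<Rightarrow> nat \<Rightarrow> real" where
  "pq_int p k = (\<Sum>j<k. p ^ j * (1 - p) ^ (k - 1 - j))"

definition pq_fact :: "real \<Rightarrow> nat \<Rightarrow> real" where
  "pq_fact p k = (\<Prod>i\<in>{1..k}. pq_int p i)"

definition pq_binom :: "real \<Rightarrow> nat \<Rightarrow> nat \<Rightarrow> real" where
  "pq_binom p n m = (if m > n then 0 else pq_fact p n / (pq_fact p (n - m) * pq_fact p m))"

end

theory Submission
  imports Defs "HOL-Computational_Algebra.Polynomial" "HOL-Combinatorics.Transposition"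
begin

text \<open>Multiplying the \<open>S\<close>-summand by \<open>D = \<Prod>\<^sub>\<alpha>\<^sub><\<^sub>\<beta> (p + q \<xi>\<^sub>\<alpha> \<xi>\<^sub>\<beta> - \<xi>\<^sub>\<alpha>)\<close> clears all
  denominators, and the identity becomes \<open>L\<^sub>n\<^sub>,\<^sub>m(\<xi>) = [n choose m] V\<^sub>n(\<xi>)\<close> between polynomials,
  with \<open>V\<^sub>n\<close> the Vandermonde product.  Both sides change sign under each adjacent transposition of
  the variables, so their difference vanishes whenever \<open>\<xi>\<^sub>a = \<xi>\<^sub>n\<close> for some \<open>a < n\<close>.  At
  \<open>\<xi>\<^sub>n = 1\<close> each factor involving \<open>\<xi>\<^sub>n\<close> becomes \<open>1 - \<xi>\<^sub>a\<close> times \<open>1\<close>, \<open>q\<close> or \<open>p\<close>, so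
  there the identity for \<open>n\<close> reduces to the one for \<open>n - 1\<close> through the \<open>(p,q)\<close>-Pascal rule.
  As a polynomial in \<open>\<xi>\<^sub>n\<close> the difference has degree at most \<open>n - 1\<close>, so for distinct
  \<open>\<xi>\<^sub>1, \<dots>, \<xi>\<^sub>n\<^sub>-\<^sub>1 \<noteq> 1\<close> these \<open>n\<close> roots force it to vanish; being polynomial in each
  variable, it then vanishes identically.\<close>

definition poly_fun :: "nat \<Rightarrow> ('a::comm_ring_1 \<Rightarrow> 'a) \<Rightarrow> bool" where
  "poly_fun d f \<longleftrightarrow> (\<exists>P. degree P \<le> d \<and> (\<forall>x. f x = poly P x))"

lemma poly_fun_const: "poly_fun d (\<lambda>x. c)"
  unfolding poly_fun_def by (rule exI[of _ "[:c:]"]) simp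

lemma poly_fun_ident: "poly_fun 1 (\<lambda>x. x)"
  unfolding poly_fun_def by (rule exI[of _ "[:0, 1:]"]) simp

lemma poly_fun_mono: "poly_fun d f \<Longrightarrow> d \<le> e \<Longrightarrow> poly_fun e f"
  unfolding poly_fun_def using order_trans by blast

lemma poly_fun_add: "poly_fun d f \<Longrightarrow> poly_fun d g \<Longrightarrow> poly_fun d (\<lambda>x. f x + g x)"
  unfolding poly_fun_def by (metis degree_add_le poly_add)

lemma poly_fun_minus: "poly_fun d f \<Longrightarrow> poly_fun d (\<lambda>x. - f x)"
  unfolding poly_fun_def by (metis degree_minus poly_minus)

lemma poly_fun_diff: "poly_fun d f \<Longrightarrow> poly_fun d g \<Longrightarrow> poly_fun d (\<lambda>x. f x - g x)"
  unfolding poly_fun_def by (metis degree_diff_le poly_diff)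

lemma poly_fun_mult: "poly_fun d f \<Longrightarrow> poly_fun e g \<Longrightarrow> poly_fun (d + e) (\<lambda>x. f x * g x)"
  unfolding poly_fun_def by (metis add_mono degree_mult_le order_trans poly_mult)

lemma poly_fun_scale: "poly_fun d f \<Longrightarrow> poly_fun d (\<lambda>x. c * f x)"
  using poly_fun_mult[where d = 0, OF poly_fun_const] by simp

lemma poly_fun_if: "poly_fun d f \<Longrightarrow> poly_fun d g \<Longrightarrow> poly_fun d (\<lambda>x. if b then f x else g x)"
  by (cases b) simp_all

lemma poly_fun_sum:
  "finite A \<Longrightarrow> (\<And>i. i \<in> A \<Longrightarrow> poly_fun d (f i)) \<Longrightarrow> poly_fun d (\<lambda>x. \<Sum>i\<in>A. f i x)"
  by (induction A rule: finite_induct) (simp_all add: poly_fun_add poly_fun_const)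

lemma poly_fun_prod:
  "finite A \<Longrightarrow> (\<And>i. i \<in> A \<Longrightarrow> poly_fun (d i) (f i)) \<Longrightarrow>
     poly_fun (\<Sum>i\<in>A. d i) (\<lambda>x. \<Prod>i\<in>A. f i x)"
  by (induction A rule: finite_induct) (simp_all add: poly_fun_mult poly_fun_const)

lemma poly_fun_vanishing_on:
  fixes f :: "'a::idom \<Rightarrow> 'a"
  assumes "poly_fun d f" "finite A" "d < card A" "\<And>x. x \<in> A \<Longrightarrow> f x = 0"
  shows "f y = 0"
proof -
  obtain P where deg: "degree P \<le> d" and f: "\<And>x. f x = poly P x"
    using assms(1) unfolding poly_fun_def by blast
  have "P = 0"
  proof (rule poly_eqI_degree)
    show "poly P x = poly 0 x" if "x \<in> A" for x
      using assms(4)[OF that] by (simp add: f)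
    show "degree P < card A" "degree 0 < card A"
      using deg assms(3) by simp_all
  qed
  then show ?thesis by (simp add: f)
qed

lemma poly_fun_vanishing_cofinite:
  fixes f :: "'a::{idom, ring_char_0} \<Rightarrow> 'a"
  assumes "poly_fun d f" "finite F" "\<And>x. x \<notin> F \<Longrightarrow> f x = 0"
  shows "f y = 0"
proof -
  have "infinite (UNIV - F :: 'a set)"
    using Diff_infinite_finite[OF assms(2) infinite_UNIV_char_0] .
  then obtain A where A: "finite A" "card A = Suc d" "A \<subseteq> UNIV - F"
    using infinite_arbitrarily_large by blast
  show ?thesis
    by (rule poly_fun_vanishing_on[OF assms(1) A(1)]) (use A assms(3) in auto)
qed

text \<open>Release one coordinate at a time: in that coordinate the function is a polynomial
  vanishing at all but finitely many points.\<close>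
lemma vanishing_if_vanishing_generic:
  fixes Q :: "('i \<Rightarrow> 'a::{idom, ring_char_0}) \<Rightarrow> 'a"
  assumes poly: "\<And>\<xi> k. \<exists>d. poly_fun d (\<lambda>x. Q (\<xi>(k := x)))"
    and "finite B"
    and generic: "\<And>\<xi>. inj_on \<xi> B \<Longrightarrow> c \<notin> \<xi> ` B \<Longrightarrow> Q \<xi> = 0"
  shows "Q \<xi> = 0"
  using assms(2) generic
proof (induction B arbitrary: \<xi> rule: finite_induct)
  case empty
  then show ?case by simp
next
  case (insert k B)
  show ?case
  proof (rule insert.IH)
    fix \<eta> assume inj: "inj_on \<eta> B" and avoid: "c \<notin> \<eta> ` B"
    obtain d where d: "poly_fun d (\<lambda>x. Q (\<eta>(k := x)))"
      using poly by blast
    have vanish: "Q (\<eta>(k := x)) = 0" if "x \<notin> insert c (\<eta> ` B)" for x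
    proof (rule insert.prems)
      have "(\<eta>(k := x)) ` B = \<eta> ` B"
        using insert.hyps(2) by (auto simp: image_def)
      moreover have "inj_on (\<eta>(k := x)) B"
        using inj insert.hyps(2) by (metis fun_upd_other inj_on_cong)
      ultimately show "inj_on (\<eta>(k := x)) (insert k B)" "c \<notin> (\<eta>(k := x)) ` insert k B"
        using that avoid insert.hyps(2) by auto
    qed
    have "Q (\<eta>(k := \<eta> k)) = 0"
      by (rule poly_fun_vanishing_cofinite[OF d, of "insert c (\<eta> ` B)"])
        (use insert.hyps(1) vanish in auto)
    then show "Q \<eta> = 0" by simp
  qed
qed

lemma pq_int_Suc: "pq_int p (Suc k) = p ^ k + (1 - p) * pq_int p k"
proof -
  have "pq_int p (Suc k) = (\<Sum>j<k. p ^ j * (1 - p) ^ (k - j)) + p ^ k"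
    unfolding pq_int_def by simp
  also have "(\<Sum>j<k. p ^ j * (1 - p) ^ (k - j)) = (1 - p) * pq_int p k"
    unfolding pq_int_def sum_distrib_left
    by (rule sum.cong) (auto simp: Suc_diff_Suc simp flip: power_Suc)
  finally show ?thesis by simp
qed

lemma pq_int_Suc': "pq_int p (Suc k) = (1 - p) ^ k + p * pq_int p k"
proof -
  have "pq_int p (Suc k) = (1 - p) ^ k + (\<Sum>j<k. p ^ Suc j * (1 - p) ^ (k - Suc j))"
    unfolding pq_int_def by (subst sum.lessThan_Suc_shift) simp
  also have "(\<Sum>j<k. p ^ Suc j * (1 - p) ^ (k - Suc j)) = p * pq_int p k"
    unfolding pq_int_def sum_distrib_left by (rule sum.cong) auto
  finally show ?thesis .
qed

lemma pq_int_add: "pq_int p (a + b) = p ^ b * pq_int p a + (1 - p) ^ a * pq_int p b"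
proof (induction a arbitrary: b)
  case 0
  then show ?case by (simp add: pq_int_def)
next
  case (Suc a)
  have "pq_int p (Suc a + b) = p ^ Suc b * pq_int p a + (1 - p) ^ a * pq_int p (Suc b)"
    using Suc.IH[of "Suc b"] by simp
  also have "\<dots> = p ^ b * pq_int p (Suc a) + (1 - p) ^ Suc a * pq_int p b"
    unfolding pq_int_Suc[of p b] pq_int_Suc'[of p a] by (simp add: algebra_simps)
  finally show ?case .
qed

lemma pq_int_pos: "0 < p \<Longrightarrow> p < 1 \<Longrightarrow> 0 < k \<Longrightarrow> 0 < pq_int p k"
  unfolding pq_int_def by (intro sum_pos) auto

lemma pq_fact_pos: "0 < p \<Longrightarrow> p < 1 \<Longrightarrow> 0 < pq_fact p k"
  unfolding pq_fact_def by (intro prod_pos) (auto intro: pq_int_pos)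

lemma pq_fact_Suc: "pq_fact p (Suc k) = pq_int p (Suc k) * pq_fact p k"
  unfolding pq_fact_def by (simp add: atLeastAtMostSuc_conv mult.commute)

lemma pq_fact_0: "pq_fact p 0 = 1"
  by (simp add: pq_fact_def)

lemma pq_binom_0:
  assumes "0 < p" "p < 1"
  shows "pq_binom p n 0 = 1"
  using pq_fact_pos[OF assms, of n] by (simp add: pq_binom_def pq_fact_0)

lemma pq_binom_diag:
  assumes "0 < p" "p < 1"
  shows "pq_binom p n n = 1"
  using pq_fact_pos[OF assms, of n] by (simp add: pq_binom_def pq_fact_0)

lemma pq_binom_Suc_Suc:
  assumes "0 < p" "p < 1"
  shows "pq_binom p (Suc k) (Suc j) = (1 - p) ^ Suc j * pq_binom p k (Suc j) + p ^ (k - j) * pq_binom p k j"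
proof -
  consider "j < k" | "j = k" | "k < j"
    by linarith
  then show ?thesis
  proof cases
    case 1
    then obtain r where r: "k = Suc (j + r)"
      using less_imp_Suc_add by blast
    define I where "I = pq_int p"
    have binoms: "pq_binom p (Suc k) (Suc j) = I (Suc k) * pq_fact p k / (I (Suc r) * pq_fact p r * (I (Suc j) * pq_fact p j))"
      "pq_binom p k (Suc j) = pq_fact p k / (pq_fact p r * (I (Suc j) * pq_fact p j))"
      "pq_binom p k j = pq_fact p k / (I (Suc r) * pq_fact p r * pq_fact p j)"
      using r by (simp_all add: pq_binom_def pq_fact_Suc I_def)
    have split: "I (Suc k) = (1 - p) ^ Suc j * I (Suc r) + p ^ Suc r * I (Suc j)"
      using pq_int_add[of p "Suc j" "Suc r"] r by (simp add: I_def)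
    have "I (Suc r) \<noteq> 0" "I (Suc j) \<noteq> 0" "pq_fact p r \<noteq> 0" "pq_fact p j \<noteq> 0"
      using pq_int_pos[OF assms, of "Suc r"] pq_int_pos[OF assms, of "Suc j"]
        pq_fact_pos[OF assms, of r] pq_fact_pos[OF assms, of j]
      unfolding I_def by simp_all
    then have "(a * I (Suc r) + b * I (Suc j)) * F / (I (Suc r) * pq_fact p r * (I (Suc j) * pq_fact p j))
        = a * (F / (pq_fact p r * (I (Suc j) * pq_fact p j))) + b * (F / (I (Suc r) * pq_fact p r * pq_fact p j))"
      for a b F
      by (simp add: field_simps)
    moreover have "k - j = Suc r"
      using r by simp
    ultimately show ?thesis
      unfolding binoms split by simp
  next
    case 2
    then show ?thesis
      using pq_binom_diag[OF assms] by (simp add: pq_binom_def)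
  next
    case 3
    then show ?thesis
      by (simp add: pq_binom_def)
  qed
qed

definition pairs :: "nat \<Rightarrow> (nat \<times> nat) set" where
  "pairs n = {(a, b). a \<in> {1..n} \<and> b \<in> {1..n} \<and> a < b}"

lemma finite_pairs: "finite (pairs n)"
  by (rule finite_subset[of _ "{1..n} \<times> {1..n}"]) (auto simp: pairs_def)

lemma prod_pairs_Suc:
  "(\<Prod>(a, b)\<in>pairs (Suc n). h a b) = (\<Prod>(a, b)\<in>pairs n. h a b) * (\<Prod>a\<in>{1..n}. h a (Suc n))"
proof -
  have "pairs (Suc n) = pairs n \<union> (\<lambda>a. (a, Suc n)) ` {1..n}"
    by (auto simp: pairs_def)
  moreover have "pairs n \<inter> (\<lambda>a. (a, Suc n)) ` {1..n} = {}"
    by (auto simp: pairs_def)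
  ultimately show ?thesis
    by (simp add: prod.union_disjoint finite_pairs prod.reindex inj_on_def)
qed

lemma prod_pairs_transpose:
  fixes h :: "nat \<Rightarrow> nat \<Rightarrow> 'a::comm_ring_1"
  assumes "1 \<le> k" "Suc k \<le> n" and antisym: "\<And>a b. h b a = - h a b"
  shows "(\<Prod>(a, b)\<in>pairs n. h (Transposition.transpose k (Suc k) a) (Transposition.transpose k (Suc k) b))
    = - (\<Prod>(a, b)\<in>pairs n. h a b)"
proof -
  let ?\<tau> = "Transposition.transpose k (Suc k)"
  define P where "P = pairs n - {(k, Suc k)}"
  have kk: "(k, Suc k) \<in> pairs n"
    using assms(1,2) by (simp add: pairs_def)
  have swap_P: "(?\<tau> a, ?\<tau> b) \<in> P" if "(a, b) \<in> P" for a b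
    using that assms(1,2) by (auto simp: P_def pairs_def Transposition.transpose_def)
  \<comment> \<open>\<open>(k, Suc k)\<close> is the only pair whose order the transposition reverses\<close>
  have "(\<Prod>(a, b)\<in>P. h (?\<tau> a) (?\<tau> b)) = (\<Prod>(a, b)\<in>P. h a b)"
    by (rule prod.reindex_bij_witness[of P "\<lambda>(a, b). (?\<tau> a, ?\<tau> b)" "\<lambda>(a, b). (?\<tau> a, ?\<tau> b)"])
      (auto simp: swap_P)
  moreover have "h (?\<tau> k) (?\<tau> (Suc k)) = - h k (Suc k)"
    using antisym[of k "Suc k"] by simp
  ultimately show ?thesis
    using prod.remove[OF finite_pairs kk, of "\<lambda>(a, b). h (?\<tau> a) (?\<tau> b)"]
      prod.remove[OF finite_pairs kk, of "\<lambda>(a, b). h a b"]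
    by (simp add: P_def)
qed

definition den :: "real \<Rightarrow> (nat \<Rightarrow> complex) \<Rightarrow> nat \<Rightarrow> nat \<Rightarrow> complex" where
  "den p \<xi> a b = of_real p + of_real (1 - p) * \<xi> a * \<xi> b - \<xi> a"

text \<open>The factor of the \<open>S\<close>-summand belonging to the pair \<open>a < b\<close>, multiplied by \<open>den p \<xi> a b\<close>;
  pairs with \<open>a \<notin> S\<close> and \<open>b \<in> S\<close> carry no factor and so contribute \<open>den p \<xi> a b\<close> itself.\<close>
definition numer :: "real \<Rightarrow> (nat \<Rightarrow> complex) \<Rightarrow> nat set \<Rightarrow> nat \<Rightarrow> nat \<Rightarrow> complex" where
  "numer p \<xi> S a b =
    (if a \<in> S \<longleftrightarrow> b \<in> S then \<xi> b - \<xi> a else if a \<in> S then - den p \<xi> b a else den p \<xi> a b)"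

definition cleared_sum :: "real \<Rightarrow> (nat \<Rightarrow> complex) \<Rightarrow> nat \<Rightarrow> nat \<Rightarrow> complex" where
  "cleared_sum p \<xi> n m = (\<Sum>S | S \<subseteq> {1..n} \<and> card S = m. \<Prod>(a, b)\<in>pairs n. numer p \<xi> S a b)"

definition vandermonde :: "(nat \<Rightarrow> complex) \<Rightarrow> nat \<Rightarrow> complex" where
  "vandermonde \<xi> n = (\<Prod>(a, b)\<in>pairs n. \<xi> b - \<xi> a)"

definition defect :: "real \<Rightarrow> nat \<Rightarrow> nat \<Rightarrow> (nat \<Rightarrow> complex) \<Rightarrow> complex" where
  "defect p n m \<xi> = cleared_sum p \<xi> n m - of_real (pq_binom p n m) * vandermonde \<xi> n"

lemma numer_antisym: "numer p \<xi> S b a = - numer p \<xi> S a b"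
  by (auto simp: numer_def)

lemma numer_transpose:
  "numer p (\<xi> \<circ> Transposition.transpose i j) (Transposition.transpose i j ` S) a b
    = numer p \<xi> S (Transposition.transpose i j a) (Transposition.transpose i j b)"
  by (simp add: numer_def den_def in_transpose_image_iff)

lemma cleared_sum_transpose:
  assumes "1 \<le> k" "Suc k \<le> n"
  shows "cleared_sum p (\<xi> \<circ> Transposition.transpose k (Suc k)) n m = - cleared_sum p \<xi> n m"
proof -
  let ?\<tau> = "Transposition.transpose k (Suc k)"
  define F where "F = {S. S \<subseteq> {1..n} \<and> card S = m}"
  have image_F: "?\<tau> ` S \<in> F" if "S \<in> F" for S
  proof -
    have "?\<tau> ` S \<subseteq> ?\<tau> ` {1..n}"
      using that by (auto simp: F_def)
    also have "?\<tau> ` {1..n} = {1..n}"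
      using assms by simp
    finally show ?thesis
      using that by (simp add: F_def card_image)
  qed
  have "cleared_sum p (\<xi> \<circ> ?\<tau>) n m = (\<Sum>S\<in>F. \<Prod>(a, b)\<in>pairs n. numer p (\<xi> \<circ> ?\<tau>) (?\<tau> ` S) a b)"
    unfolding cleared_sum_def F_def[symmetric]
    by (rule sum.reindex_bij_witness[of _ "image ?\<tau>" "image ?\<tau>"]) (auto simp: image_F image_image)
  also have "\<dots> = (\<Sum>S\<in>F. \<Prod>(a, b)\<in>pairs n. numer p \<xi> S (?\<tau> a) (?\<tau> b))"
    by (simp only: numer_transpose)
  also have "\<dots> = (\<Sum>S\<in>F. - (\<Prod>(a, b)\<in>pairs n. numer p \<xi> S a b))"
    by (intro sum.cong refl prod_pairs_transpose[OF assms] numer_antisym)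
  finally show ?thesis
    by (simp add: cleared_sum_def F_def sum_negf)
qed

lemma vandermonde_transpose:
  assumes "1 \<le> k" "Suc k \<le> n"
  shows "vandermonde (\<xi> \<circ> Transposition.transpose k (Suc k)) n = - vandermonde \<xi> n"
  using prod_pairs_transpose[OF assms, of "\<lambda>a b. \<xi> b - \<xi> a"] by (simp add: vandermonde_def)

lemma defect_transpose:
  assumes "1 \<le> k" "Suc k \<le> n"
  shows "defect p n m (\<xi> \<circ> Transposition.transpose k (Suc k)) = - defect p n m \<xi>"
  by (simp add: defect_def cleared_sum_transpose[OF assms] vandermonde_transpose[OF assms])

lemma defect_eq_0_if_eq_last:
  assumes "1 \<le> a" "a < n" "\<xi> a = \<xi> n"
  shows "defect p n m \<xi> = 0"
  using assms
proof (induction "n - a" arbitrary: a \<xi> rule: less_induct)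
  case less
  have a: "1 \<le> a" "Suc a \<le> n"
    using less.prems by auto
  show ?case
  proof (cases "Suc a = n")
    case True
    then have "\<xi> \<circ> Transposition.transpose a (Suc a) = \<xi>"
      using less.prems by (auto simp: fun_eq_iff Transposition.transpose_def)
    then show ?thesis
      using defect_transpose[OF a, of p m \<xi>] by simp
  next
    case False
    have "defect p n m (\<xi> \<circ> Transposition.transpose a (Suc a)) = 0"
      by (rule less.hyps[of "Suc a"]) (use less.prems False in auto)
    then show ?thesis
      using defect_transpose[OF a, of p m \<xi>] by simp
  qed
qed

lemma poly_fun_prod_pairs:
  assumes "\<And>a b. poly_fun d (\<lambda>x. h x a b)"
  shows "poly_fun (card (pairs n) * d) (\<lambda>x. \<Prod>(a, b)\<in>pairs n. h x a b)"
  using poly_fun_prod[OF finite_pairs, of n "\<lambda>_. d" "\<lambda>(a, b) x. h x a b"] assms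
  by (simp add: case_prod_beta)

lemma poly_fun_prod_pairs_Suc:
  assumes "\<And>a b x y. a < b \<Longrightarrow> b \<le> k \<Longrightarrow> h x a b = h y a b"
    and "\<And>a. a \<in> {1..k} \<Longrightarrow> poly_fun 1 (\<lambda>x. h x a (Suc k))"
  shows "poly_fun k (\<lambda>x. \<Prod>(a, b)\<in>pairs (Suc k). h x a b)"
proof -
  define C where "C = (\<Prod>(a, b)\<in>pairs k. h 0 a b)"
  have "(\<Prod>(a, b)\<in>pairs (Suc k). h x a b) = C * (\<Prod>a\<in>{1..k}. h x a (Suc k))" for x
  proof -
    have "(\<Prod>(a, b)\<in>pairs k. h x a b) = C"
      unfolding C_def using assms(1) by (intro prod.cong) (auto simp: pairs_def)
    then show ?thesis
      by (simp add: prod_pairs_Suc)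
  qed
  moreover have "poly_fun (\<Sum>a\<in>{1..k}. 1) (\<lambda>x. \<Prod>a\<in>{1..k}. h x a (Suc k))"
    by (intro poly_fun_prod finite_atLeastAtMost assms(2))
  ultimately show ?thesis
    by (simp add: poly_fun_scale)
qed

lemma poly_fun_upd: "poly_fun 1 (\<lambda>x. (\<xi>(k := x)) a)"
  unfolding fun_upd_apply by (intro poly_fun_if poly_fun_ident poly_fun_const)

lemma poly_fun_den: "poly_fun 2 (\<lambda>x. den p (\<xi>(k := x)) a b)"
proof -
  have "poly_fun (1 + 1) (\<lambda>x. of_real (1 - p) * (\<xi>(k := x)) a * (\<xi>(k := x)) b)"
    by (intro poly_fun_mult poly_fun_scale poly_fun_upd)
  then have "poly_fun 2 (\<lambda>x. of_real (1 - p) * (\<xi>(k := x)) a * (\<xi>(k := x)) b)"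
    unfolding one_add_one .
  moreover have "poly_fun 2 (\<lambda>x. (\<xi>(k := x)) a)"
    by (rule poly_fun_mono[OF poly_fun_upd]) simp
  ultimately show ?thesis
    unfolding den_def by (intro poly_fun_diff poly_fun_add poly_fun_const)
qed

lemma poly_fun_numer: "poly_fun 2 (\<lambda>x. numer p (\<xi>(k := x)) S a b)"
  unfolding numer_def
  by (intro poly_fun_if poly_fun_diff poly_fun_minus poly_fun_den poly_fun_mono[OF poly_fun_upd]) simp_all

lemma poly_fun_numer_last:
  assumes "a \<noteq> j"
  shows "poly_fun 1 (\<lambda>x. numer p (\<xi>(j := x)) S a j)"
proof -
  have "numer p (\<xi>(j := x)) S a j =
      (if a \<in> S \<longleftrightarrow> j \<in> S then x - \<xi> a
       else if a \<in> S then (1 - of_real (1 - p) * \<xi> a) * x - of_real p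
       else (of_real (1 - p) * \<xi> a) * x + (of_real p - \<xi> a))" for x
    using assms by (simp add: numer_def den_def algebra_simps)
  then show ?thesis
    by (simp only:) (intro poly_fun_if poly_fun_add poly_fun_diff poly_fun_scale poly_fun_ident poly_fun_const)
qed

lemma poly_fun_defect: "\<exists>d. poly_fun d (\<lambda>x. defect p n m (\<xi>(k := x)))"
proof -
  have "poly_fun (card (pairs n) * 2) (\<lambda>x. cleared_sum p (\<xi>(k := x)) n m)"
    unfolding cleared_sum_def by (intro poly_fun_sum poly_fun_prod_pairs poly_fun_numer) auto
  moreover have "poly_fun (card (pairs n) * 2) (\<lambda>x. vandermonde (\<xi>(k := x)) n)"
    unfolding vandermonde_def
    by (intro poly_fun_prod_pairs poly_fun_diff poly_fun_mono[OF poly_fun_upd]) simp_all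
  ultimately have "poly_fun (card (pairs n) * 2) (\<lambda>x. defect p n m (\<xi>(k := x)))"
    unfolding defect_def by (intro poly_fun_diff poly_fun_scale)
  then show ?thesis ..
qed

lemma poly_fun_defect_last: "poly_fun k (\<lambda>x. defect p (Suc k) m (\<xi>(Suc k := x)))"
proof -
  have "poly_fun k (\<lambda>x. cleared_sum p (\<xi>(Suc k := x)) (Suc k) m)"
    unfolding cleared_sum_def
    by (intro poly_fun_sum poly_fun_prod_pairs_Suc poly_fun_numer_last)
      (auto simp: numer_def den_def)
  moreover have "poly_fun k (\<lambda>x. vandermonde (\<xi>(Suc k := x)) (Suc k))"
    unfolding vandermonde_def
    by (intro poly_fun_prod_pairs_Suc poly_fun_diff poly_fun_upd) auto
  ultimately show ?thesis
    unfolding defect_def by (intro poly_fun_diff poly_fun_scale)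
qed

lemma sum_subsets_card_insert:
  assumes "finite A" "x \<notin> A"
  shows "(\<Sum>S | S \<subseteq> insert x A \<and> card S = Suc m. f S)
    = (\<Sum>S | S \<subseteq> A \<and> card S = Suc m. f S) + (\<Sum>S | S \<subseteq> A \<and> card S = m. f (insert x S))"
proof -
  let ?N = "{S. S \<subseteq> A \<and> card S = Suc m}" and ?M = "{S. S \<subseteq> A \<and> card S = m}"
  have "{S. S \<subseteq> insert x A \<and> card S = Suc m} = ?N \<union> insert x ` ?M"
  proof (intro set_eqI iffI)
    fix S assume S: "S \<in> {S. S \<subseteq> insert x A \<and> card S = Suc m}"
    show "S \<in> ?N \<union> insert x ` ?M"
    proof (cases "x \<in> S")
      case True
      then have "S = insert x (S - {x})" "S - {x} \<in> ?M"
        using S finite_subset[OF _ finite_insert[THEN iffD2, OF assms(1)]] by auto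
      then show ?thesis by blast
    qed (use S in auto)
  next
    fix S assume "S \<in> ?N \<union> insert x ` ?M"
    then show "S \<in> {S. S \<subseteq> insert x A \<and> card S = Suc m}"
    proof
      assume "S \<in> insert x ` ?M"
      then obtain T where "T \<subseteq> A" "card T = m" "S = insert x T"
        by blast
      moreover have "finite T" "x \<notin> T"
        using \<open>T \<subseteq> A\<close> assms finite_subset by auto
      ultimately show ?thesis
        by auto
    qed auto
  qed
  moreover have "?N \<inter> insert x ` ?M = {}" and "inj_on (insert x) ?M"
    using assms(2) by (auto simp: inj_on_def)
  moreover have "finite ?N" "finite ?M"
    using assms(1) by simp_all
  ultimately show ?thesis
    by (simp add: sum.union_disjoint sum.reindex)
qed

lemma prod_column_at_1:
  assumes "S \<subseteq> {1..k}"
  shows "(\<Prod>a\<in>{1..k}. numer p (\<xi>(Suc k := 1)) S a (Suc k))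
      = of_real (1 - p) ^ card S * (\<Prod>a\<in>{1..k}. 1 - \<xi> a)"
    and "(\<Prod>a\<in>{1..k}. numer p (\<xi>(Suc k := 1)) (insert (Suc k) S) a (Suc k))
      = of_real p ^ (k - card S) * (\<Prod>a\<in>{1..k}. 1 - \<xi> a)"
proof -
  have "Suc k \<notin> S" "finite S"
    using assms finite_subset by auto
  have "(\<Prod>a\<in>{1..k}. numer p (\<xi>(Suc k := 1)) S a (Suc k))
      = (\<Prod>a\<in>{1..k}. (if a \<in> S then of_real (1 - p) else 1) * (1 - \<xi> a))"
    using \<open>Suc k \<notin> S\<close> by (intro prod.cong) (auto simp: numer_def den_def algebra_simps)
  also have "\<dots> = of_real (1 - p) ^ card S * (\<Prod>a\<in>{1..k}. 1 - \<xi> a)"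
    using assms by (simp add: prod.distrib prod.If_cases Int_absorb1)
  finally show "(\<Prod>a\<in>{1..k}. numer p (\<xi>(Suc k := 1)) S a (Suc k))
      = of_real (1 - p) ^ card S * (\<Prod>a\<in>{1..k}. 1 - \<xi> a)" .
  have "(\<Prod>a\<in>{1..k}. numer p (\<xi>(Suc k := 1)) (insert (Suc k) S) a (Suc k))
      = (\<Prod>a\<in>{1..k}. (if a \<in> S then 1 else of_real p) * (1 - \<xi> a))"
    by (intro prod.cong) (auto simp: numer_def den_def algebra_simps)
  also have "\<dots> = of_real p ^ (k - card S) * (\<Prod>a\<in>{1..k}. 1 - \<xi> a)"
    using assms \<open>finite S\<close> by (simp add: prod.distrib prod.If_cases Diff_eq[symmetric] card_Diff_subset)
  finally show "(\<Prod>a\<in>{1..k}. numer p (\<xi>(Suc k := 1)) (insert (Suc k) S) a (Suc k))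
      = of_real p ^ (k - card S) * (\<Prod>a\<in>{1..k}. 1 - \<xi> a)" .
qed

lemma prod_numer_at_1:
  assumes "S \<subseteq> {1..k}"
  shows "(\<Prod>(a, b)\<in>pairs (Suc k). numer p (\<xi>(Suc k := 1)) S a b)
      = of_real (1 - p) ^ card S * (\<Prod>a\<in>{1..k}. 1 - \<xi> a) * (\<Prod>(a, b)\<in>pairs k. numer p \<xi> S a b)"
    and "(\<Prod>(a, b)\<in>pairs (Suc k). numer p (\<xi>(Suc k := 1)) (insert (Suc k) S) a b)
      = of_real p ^ (k - card S) * (\<Prod>a\<in>{1..k}. 1 - \<xi> a) * (\<Prod>(a, b)\<in>pairs k. numer p \<xi> S a b)"
proof -
  have inner: "(\<Prod>(a, b)\<in>pairs k. numer p (\<xi>(Suc k := 1)) S a b) = (\<Prod>(a, b)\<in>pairs k. numer p \<xi> S a b)"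
    "(\<Prod>(a, b)\<in>pairs k. numer p (\<xi>(Suc k := 1)) (insert (Suc k) S) a b) = (\<Prod>(a, b)\<in>pairs k. numer p \<xi> S a b)"
    by (auto intro!: prod.cong simp: pairs_def numer_def den_def)
  show "(\<Prod>(a, b)\<in>pairs (Suc k). numer p (\<xi>(Suc k := 1)) S a b)
      = of_real (1 - p) ^ card S * (\<Prod>a\<in>{1..k}. 1 - \<xi> a) * (\<Prod>(a, b)\<in>pairs k. numer p \<xi> S a b)"
    and "(\<Prod>(a, b)\<in>pairs (Suc k). numer p (\<xi>(Suc k := 1)) (insert (Suc k) S) a b)
      = of_real p ^ (k - card S) * (\<Prod>a\<in>{1..k}. 1 - \<xi> a) * (\<Prod>(a, b)\<in>pairs k. numer p \<xi> S a b)"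
    unfolding prod_pairs_Suc inner prod_column_at_1[OF assms] by (simp_all only: mult_ac)
qed

lemma cleared_sum_at_1:
  "cleared_sum p (\<xi>(Suc k := 1)) (Suc k) (Suc j) = (\<Prod>a\<in>{1..k}. 1 - \<xi> a) *
     (of_real (1 - p) ^ Suc j * cleared_sum p \<xi> k (Suc j) + of_real p ^ (k - j) * cleared_sum p \<xi> k j)"
proof -
  let ?C = "\<Prod>a\<in>{1..k}. 1 - \<xi> a" and ?P = "\<lambda>S. \<Prod>(a, b)\<in>pairs k. numer p \<xi> S a b"
  have "{1..Suc k} = insert (Suc k) {1..k}"
    by auto
  then have "cleared_sum p (\<xi>(Suc k := 1)) (Suc k) (Suc j)
      = (\<Sum>S | S \<subseteq> {1..k} \<and> card S = Suc j. \<Prod>(a, b)\<in>pairs (Suc k). numer p (\<xi>(Suc k := 1)) S a b)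
      + (\<Sum>S | S \<subseteq> {1..k} \<and> card S = j. \<Prod>(a, b)\<in>pairs (Suc k). numer p (\<xi>(Suc k := 1)) (insert (Suc k) S) a b)"
    unfolding cleared_sum_def by (simp add: sum_subsets_card_insert)
  also have "\<dots> = (\<Sum>S | S \<subseteq> {1..k} \<and> card S = Suc j. of_real (1 - p) ^ Suc j * ?C * ?P S)
      + (\<Sum>S | S \<subseteq> {1..k} \<and> card S = j. of_real p ^ (k - j) * ?C * ?P S)"
    by (intro arg_cong2[where f = "(+)"] sum.cong refl) (simp_all add: prod_numer_at_1)
  finally show ?thesis
    by (simp add: cleared_sum_def sum_distrib_left algebra_simps)
qed

lemma vandermonde_at_1:
  "vandermonde (\<xi>(Suc k := 1)) (Suc k) = (\<Prod>a\<in>{1..k}. 1 - \<xi> a) * vandermonde \<xi> k"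
proof -
  have "(\<Prod>(a, b)\<in>pairs k. (\<xi>(Suc k := 1)) b - (\<xi>(Suc k := 1)) a) = vandermonde \<xi> k"
    unfolding vandermonde_def by (intro prod.cong) (auto simp: pairs_def)
  then show ?thesis
    by (simp add: vandermonde_def prod_pairs_Suc)
qed

lemma defect_at_1:
  assumes "0 < p" "p < 1" and IH: "\<And>m \<xi>. defect p k m \<xi> = 0"
  shows "defect p (Suc k) (Suc j) (\<xi>(Suc k := 1)) = 0"
proof -
  have "cleared_sum p \<xi> k i = of_real (pq_binom p k i) * vandermonde \<xi> k" for i
    using IH[of i \<xi>] by (simp add: defect_def)
  then show ?thesis
    by (simp add: defect_def cleared_sum_at_1 vandermonde_at_1 pq_binom_Suc_Suc[OF assms(1,2)] algebra_simps)
qed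

lemma defect_card_0:
  assumes "0 < p" "p < 1"
  shows "defect p n 0 \<xi> = 0"
proof -
  have "{S. S \<subseteq> {1..n} \<and> card S = 0} = {{}}"
    by (auto dest: finite_subset)
  then show ?thesis
    by (simp add: defect_def cleared_sum_def vandermonde_def numer_def pq_binom_0[OF assms])
qed

lemma defect_Suc_eq_0_generic:
  assumes "0 < p" "p < 1" and IH: "\<And>m \<xi>. defect p k m \<xi> = 0"
    and "inj_on \<xi> {1..k}" "1 \<notin> \<xi> ` {1..k}"
  shows "defect p (Suc k) (Suc j) \<xi> = 0"
proof -
  let ?R = "insert 1 (\<xi> ` {1..k})"
  have "defect p (Suc k) (Suc j) (\<xi>(Suc k := x)) = 0" if x: "x \<in> ?R" for x
  proof (cases "x = 1")
    case True
    then show ?thesis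
      using defect_at_1[OF assms(1,2) IH] by simp
  next
    case False
    then obtain a where "a \<in> {1..k}" "x = \<xi> a"
      using x by blast
    then show ?thesis
      using defect_eq_0_if_eq_last[of a "Suc k" "\<xi>(Suc k := x)"] by auto
  qed
  moreover have "k < card ?R"
    using assms(4,5) by (simp add: card_image)
  ultimately show ?thesis
    using poly_fun_vanishing_on[OF poly_fun_defect_last[of k p "Suc j" \<xi>], of ?R "\<xi> (Suc k)"] by simp
qed

lemma defect_eq_0:
  assumes "0 < p" "p < 1"
  shows "defect p n m \<xi> = 0"
proof (induction n arbitrary: m \<xi>)
  case 0
  show ?case
  proof (cases m)
    case (Suc j)
    have no_subsets: "{S. S \<subseteq> {1..0::nat} \<and> card S = Suc j} = {}"
      by auto
    show ?thesis
      unfolding defect_def cleared_sum_def \<open>m = Suc j\<close> no_subsets by (simp add: pq_binom_def)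
  qed (simp add: defect_card_0[OF assms])
next
  case (Suc k)
  show ?case
  proof (cases m)
    case (Suc j)
    show ?thesis
      unfolding \<open>m = Suc j\<close>
      by (rule vanishing_if_vanishing_generic[OF poly_fun_defect finite_atLeastAtMost])
        (rule defect_Suc_eq_0_generic[OF assms Suc.IH])
  qed (simp add: defect_card_0[OF assms])
qed

lemma Tm_eq: "Tm p \<xi> b a = (\<xi> b - \<xi> a) / den p \<xi> a b"
  unfolding Tm_def den_def ..

lemma Sm_eq: "Sm p \<xi> b a = - den p \<xi> b a / den p \<xi> a b"
  unfolding Sm_def den_def by (simp add: mult_ac)

lemma summand_times_den:
  assumes "S \<subseteq> {1..n}" and nz: "\<And>a b. (a, b) \<in> pairs n \<Longrightarrow> den p \<xi> a b \<noteq> 0"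
  shows "(\<Prod>(\<alpha>, \<beta>)\<in>{(\<alpha>, \<beta>). \<alpha> \<in> {1..n} - S \<and> \<beta> \<in> {1..n} - S \<and> \<alpha> < \<beta>}. Tm p \<xi> \<beta> \<alpha>)
    * (\<Prod>(\<alpha>, \<beta>)\<in>{(\<alpha>, \<beta>). \<alpha> \<in> S \<and> \<beta> \<in> S \<and> \<alpha> < \<beta>}. Tm p \<xi> \<beta> \<alpha>)
    * (\<Prod>(\<alpha>, \<beta>)\<in>{(\<alpha>, \<beta>). \<alpha> \<in> S \<and> \<beta> \<in> {1..n} - S \<and> \<alpha> < \<beta>}. Sm p \<xi> \<beta> \<alpha>)
    * (\<Prod>(a, b)\<in>pairs n. den p \<xi> a b)
    = (\<Prod>(a, b)\<in>pairs n. numer p \<xi> S a b)"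
proof -
  have restrict: "(\<Prod>(\<alpha>, \<beta>)\<in>{(\<alpha>, \<beta>). \<alpha> \<in> A \<and> \<beta> \<in> B \<and> \<alpha> < \<beta>}. f \<alpha> \<beta>)
      = (\<Prod>(a, b)\<in>pairs n. if a \<in> A \<and> b \<in> B then f a b else 1)"
    if "A \<subseteq> {1..n}" "B \<subseteq> {1..n}" for A B and f :: "nat \<Rightarrow> nat \<Rightarrow> complex"
  proof -
    have "{(\<alpha>, \<beta>). \<alpha> \<in> A \<and> \<beta> \<in> B \<and> \<alpha> < \<beta>} = {z \<in> pairs n. fst z \<in> A \<and> snd z \<in> B}"
      using that by (auto simp: pairs_def)
    then show ?thesis
      by (simp add: prod.inter_filter[OF finite_pairs] case_prod_beta)
  qed
  show ?thesis
    unfolding restrict[OF Diff_subset Diff_subset] restrict[OF assms(1) assms(1)]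
      restrict[OF assms(1) Diff_subset] prod.distrib[symmetric]
    by (intro prod.cong refl) (auto simp: numer_def Tm_eq Sm_eq nz pairs_def)
qed

theorem lemma2p5:
  fixes p :: real and \<xi> :: "nat \<Rightarrow> complex" and n m :: nat
  assumes "0 < p" "p < 1" "1 \<le> n" "m \<le> n"
    and "\<And>\<alpha> \<beta>. 1 \<le> \<alpha> \<Longrightarrow> \<alpha> < \<beta> \<Longrightarrow> \<beta> \<le> n \<Longrightarrow>
           of_real p + of_real (1 - p) * \<xi> \<alpha> * \<xi> \<beta> - \<xi> \<alpha> \<noteq> 0"
  shows "(\<Sum>S\<in>{S. S \<subseteq> {1..n} \<and> card S = m}.
            (\<Prod>(\<alpha>, \<beta>)\<in>{(\<alpha>, \<beta>). \<alpha> \<in> {1..n} - S \<and> \<beta> \<in> {1..n} - S \<and> \<alpha> < \<beta>}. Tm p \<xi> \<beta> \<alpha>)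
          * (\<Prod>(\<alpha>, \<beta>)\<in>{(\<alpha>, \<beta>). \<alpha> \<in> S \<and> \<beta> \<in> S \<and> \<alpha> < \<beta>}. Tm p \<xi> \<beta> \<alpha>)
          * (\<Prod>(\<alpha>, \<beta>)\<in>{(\<alpha>, \<beta>). \<alpha> \<in> S \<and> \<beta> \<in> {1..n} - S \<and> \<alpha> < \<beta>}. Sm p \<xi> \<beta> \<alpha>))
       = of_real (pq_binom p n m)
          * (\<Prod>(\<alpha>, \<beta>)\<in>{(\<alpha>, \<beta>). \<alpha> \<in> {1..n} \<and> \<beta> \<in> {1..n} \<and> \<alpha> < \<beta>}. Tm p \<xi> \<beta> \<alpha>)"
  (is "?L = ?R")
proof -
  let ?D = "\<Prod>(a, b)\<in>pairs n. den p \<xi> a b"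
  have nz: "den p \<xi> a b \<noteq> 0" if "(a, b) \<in> pairs n" for a b
    using assms(5)[of a b] that by (auto simp: pairs_def den_def)
  then have "?D \<noteq> 0"
    by (auto simp: prod_zero_iff[OF finite_pairs])
  have "?L * ?D = cleared_sum p \<xi> n m"
    unfolding cleared_sum_def sum_distrib_right by (intro sum.cong refl summand_times_den nz) auto
  also have "\<dots> = of_real (pq_binom p n m) * vandermonde \<xi> n"
    using defect_eq_0[OF assms(1,2)] by (simp add: defect_def)
  also have "vandermonde \<xi> n = (\<Prod>(a, b)\<in>pairs n. Tm p \<xi> b a) * ?D"
    unfolding vandermonde_def prod.distrib[symmetric] by (intro prod.cong refl) (auto simp: Tm_eq nz)
  finally have "?L * ?D = ?R * ?D"
    unfolding pairs_def by (simp add: mult.assoc)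
  then show ?thesis
    using \<open>?D \<noteq> 0\<close> by simp
qed

end
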